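(* Let $G$ be a tree on $n$ vertices. Then $G\in\mathcal{G}^{\rm SSP}$ if and only if $G$ contains no vertex of degree at least four and does not contain two vertices of degree three.
   Context: All graphs are finite, simple, undirected. For a graph $G$ on $\{1,\ldots,n\}$, $\mathcal{S}(G)$ is the set of real symmetric $n\times n$ matrices $A=(a_{ij})$ with $a_{ij}\neq0$ iff $\{i,j\}\in E(G)$ for $i\neq j$ (diagonal arbitrary). A real symmetric $A$ has the strong spectral property (SSP) if the only real symmetric $X$ with $A\circ X=0$, $I\circ X=0$, $AX-XA=0$ is $X=0$ ($\circ$ = entrywise product). $\mathcal{G}^{\rm SSP}$ is the set of graphs $G$ such that every matrix in $\mathcal{S}(G)$ has the SSP. *)

theory Defs
  imports "HOL-Analysis.Analysis"
begin

text \<open>A finite simple graph on the vertex type 'n (vertex set UNIV, of size CARD('n)),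
  given by a symmetric irreflexive adjacency relation.\<close>

definition simple_graph :: "('n::finite \<Rightarrow> 'n \<Rightarrow> bool) \<Rightarrow> bool" where
  "simple_graph E \<longleftrightarrow> (\<forall>i j. E i j \<longrightarrow> E j i) \<and> (\<forall>i. \<not> E i i)"

definition connected_graph :: "('n::finite \<Rightarrow> 'n \<Rightarrow> bool) \<Rightarrow> bool" where
  "connected_graph E \<longleftrightarrow> (\<forall>u v. E\<^sup>*\<^sup>* u v)"

definition is_cycle :: "('n \<Rightarrow> 'n \<Rightarrow> bool) \<Rightarrow> 'n list \<Rightarrow> bool" where
  "is_cycle E vs \<longleftrightarrow> length vs \<ge> 3 \<and> distinct vs
     \<and> (\<forall>k. Suc k < length vs \<longrightarrow> E (vs ! k) (vs ! Suc k))
     \<and> E (last vs) (hd vs)"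

definition acyclic_graph :: "('n::finite \<Rightarrow> 'n \<Rightarrow> bool) \<Rightarrow> bool" where
  "acyclic_graph E \<longleftrightarrow> (\<nexists>vs. is_cycle E vs)"

definition is_tree :: "('n::finite \<Rightarrow> 'n \<Rightarrow> bool) \<Rightarrow> bool" where
  "is_tree E \<longleftrightarrow> simple_graph E \<and> connected_graph E \<and> acyclic_graph E"

definition degree :: "('n::finite \<Rightarrow> 'n \<Rightarrow> bool) \<Rightarrow> 'n \<Rightarrow> nat" where
  "degree E v = card {w. E v w}"

definition symmetric_mat :: "real^'n^'n \<Rightarrow> bool" where
  "symmetric_mat A \<longleftrightarrow> transpose A = A"

definition S_graph :: "('n::finite \<Rightarrow> 'n \<Rightarrow> bool) \<Rightarrow> (real^'n^'n) set" where
  "S_graph E = {A. symmetric_mat A \<and> (\<forall>i j. i \<noteq> j \<longrightarrow> (A$i$j \<noteq> 0 \<longleftrightarrow> E i j))}"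

definition SSP :: "real^'n^'n \<Rightarrow> bool" where
  "SSP A \<longleftrightarrow> (\<forall>X::real^'n^'n. symmetric_mat X
      \<and> (\<forall>i j. A$i$j * X$i$j = 0) \<and> (\<forall>i. X$i$i = 0)
      \<and> A ** X - X ** A = 0 \<longrightarrow> X = 0)"

definition in_G_SSP :: "('n::finite \<Rightarrow> 'n \<Rightarrow> bool) \<Rightarrow> bool" where
  "in_G_SSP E \<longleftrightarrow> (\<forall>A \<in> S_graph E. SSP A)"

end

(* If v has four neighbours, or two vertices have three neighbours each, the tree contains
   two pairs of sibling branches B1, B2 (hanging at a vertex v) and C1, C2 (hanging at w) that
   are pairwise disjoint and non-adjacent. Let A be the adjacency matrix minus the diagonal
   matrix of degrees inside U = B1 \<union> B2 \<union> C1 \<union> C2. Then x = 1_B1 - 1_B2 and y = 1_C1 - 1_C2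
   are null vectors of A, and X = x y^T + y x^T is a nonzero symmetric matrix commuting with A
   and vanishing on the diagonal and on the edges, so A does not have the SSP.

   Otherwise the tree is a spider with at most three legs. Rooting it at the centre, the entries
   X_xy of a matrix X as in the SSP vanish by induction on the distance of x and y. For x, y on
   a common leg this follows from a single entry of AX = XA. For x, y on different legs,
   rescaling X_xy by the products of the entries of A along the paths from the centre to x and
   to y turns the entries of AX = XA into the statement that the value can be slid along the
   path from x to y; hence it only depends on the two legs. These values form a symmetric array
   over at most three legs with zero row sums, so they vanish. *)

theory Submission
  imports Defs
begin

lemma rtranclp_imp_distinct_path:
  assumes "R\<^sup>*\<^sup>* a b"
  shows "\<exists>ps. ps \<noteq> [] \<and> hd ps = a \<and> last ps = b \<and> distinct ps \<and>
           (\<forall>k. Suc k < length ps \<longrightarrow> R (ps ! k) (ps ! Suc k))"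
  using assms
proof (induction rule: rtranclp_induct)
  case base
  show ?case by (intro exI[of _ "[a]"]) auto
next
  case (step y z)
  then obtain ps where ps: "ps \<noteq> []" "hd ps = a" "last ps = y" "distinct ps"
    "\<forall>k. Suc k < length ps \<longrightarrow> R (ps ! k) (ps ! Suc k)" by blast
  show ?case
  proof (cases "z \<in> set ps")
    case True
    then obtain i where i: "i < length ps" "ps ! i = z" by (auto simp: in_set_conv_nth)
    let ?qs = "take (Suc i) ps"
    have "last ?qs = z" using i by (simp add: take_Suc_conv_app_nth)
    moreover have "hd ?qs = a" using ps i by (simp add: hd_conv_nth)
    ultimately show ?thesis using ps by (intro exI[of _ ?qs]) auto
  next
    case False
    let ?qs = "ps @ [z]"
    have "R (?qs ! k) (?qs ! Suc k)" if k: "Suc k < length ?qs" for k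
    proof (cases "Suc k < length ps")
      case True
      then show ?thesis using ps(5) by (simp add: nth_append)
    next
      case False
      then have "k = length ps - 1" using k by simp
      then show ?thesis using ps step.hyps(2) by (simp add: nth_append last_conv_nth)
    qed
    then show ?thesis using ps False by (intro exI[of _ ?qs]) auto
  qed
qed

lemma acyclic_neighbours_not_connected_avoiding:
  assumes acyclic: "acyclic_graph E" and sym: "\<And>i j. E i j \<Longrightarrow> E j i"
    and va: "E v a" and vb: "E v b" and "a \<noteq> b"
  shows "\<not> (\<lambda>x y. E x y \<and> x \<noteq> v \<and> y \<noteq> v)\<^sup>*\<^sup>* a b"
proof
  assume walk: "(\<lambda>x y. E x y \<and> x \<noteq> v \<and> y \<noteq> v)\<^sup>*\<^sup>* a b"
  obtain ps where ps: "ps \<noteq> []" "hd ps = a" "last ps = b" "distinct ps"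
    and steps: "\<forall>k. Suc k < length ps \<longrightarrow> E (ps ! k) (ps ! Suc k) \<and> ps ! k \<noteq> v \<and> ps ! Suc k \<noteq> v"
    using rtranclp_imp_distinct_path[OF walk] by blast
  have len: "length ps \<ge> 2"
  proof (rule ccontr)
    assume "\<not> length ps \<ge> 2"
    then have "ps = [hd ps]" using ps(1) by (cases ps) (simp_all add: not_le)
    then show False using ps(2,3) \<open>a \<noteq> b\<close> by (metis last_ConsL)
  qed
  have "v \<notin> set ps"
  proof
    assume "v \<in> set ps"
    then obtain k where k: "k < length ps" "ps ! k = v" by (auto simp: in_set_conv_nth)
    show False
    proof (cases "Suc k < length ps")
      case True
      then show ?thesis using steps k by blast
    next
      case False
      then have "Suc (k - 1) < length ps" "Suc (k - 1) = k" using k len by auto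
      then show ?thesis using steps k by metis
    qed
  qed
  have "is_cycle E (v # ps)"
    unfolding is_cycle_def
  proof (intro conjI allI impI)
    show "3 \<le> length (v # ps)" using len by simp
    show "distinct (v # ps)" using \<open>v \<notin> set ps\<close> ps(4) by simp
    show "E (last (v # ps)) (hd (v # ps))" using ps(1,3) sym[OF vb] by simp
  next
    fix k assume k: "Suc k < length (v # ps)"
    show "E ((v # ps) ! k) ((v # ps) ! Suc k)"
    proof (cases k)
      case 0
      then show ?thesis using va ps(1,2) by (simp add: hd_conv_nth)
    next
      case (Suc m)
      then show ?thesis using steps k by simp
    qed
  qed
  then show False using acyclic unfolding acyclic_graph_def by blast
qed

definition separated :: "('n \<Rightarrow> 'n \<Rightarrow> bool) \<Rightarrow> 'n set \<Rightarrow> 'n set \<Rightarrow> bool" where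
  "separated E S T \<longleftrightarrow> S \<inter> T = {} \<and> (\<forall>z\<in>S. \<forall>z'\<in>T. \<not> E z z')"

lemma separated_Un_left [simp]:
  "separated E (S \<union> S') T \<longleftrightarrow> separated E S T \<and> separated E S' T"
  unfolding separated_def by blast

lemma separated_Un_right [simp]:
  "separated E S (T \<union> T') \<longleftrightarrow> separated E S T \<and> separated E S T'"
  unfolding separated_def by blast

lemma separated_mono: "separated E S T \<Longrightarrow> T' \<subseteq> T \<Longrightarrow> separated E S T'"
  unfolding separated_def by blast

lemma separated_sym: "simple_graph E \<Longrightarrow> separated E S T \<Longrightarrow> separated E T S"
  unfolding separated_def simple_graph_def by blast

lemma symmetric_mat_entry: "symmetric_mat A \<Longrightarrow> A $ j $ i = A $ i $ j"
  unfolding symmetric_mat_def by (metis transpose_def vec_lambda_beta)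

lemma not_SSP_if_null_vectors:
  fixes A :: "real^'n^'n" and x y :: "real^'n"
  assumes A: "symmetric_mat A" and Ax: "A *v x = 0" and Ay: "A *v y = 0"
    and disjoint: "\<And>i. x $ i * y $ i = 0"
    and nonadjacent: "\<And>i j. A $ i $ j \<noteq> 0 \<Longrightarrow> x $ i * y $ j = 0"
    and "x \<noteq> 0" "y \<noteq> 0"
  shows "\<not> SSP A"
proof
  assume ssp: "SSP A"
  define X :: "real^'n^'n" where "X = (\<chi> i j. x $ i * y $ j + y $ i * x $ j)"
  have X: "X $ i $ j = x $ i * y $ j + y $ i * x $ j" for i j
    unfolding X_def by simp
  have "symmetric_mat X"
    unfolding symmetric_mat_def by (simp add: vec_eq_iff transpose_def X)
  moreover have "A $ i $ j * X $ i $ j = 0" for i j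
  proof (cases "A $ i $ j = 0")
    case False
    then have "x $ i * y $ j = 0" "x $ j * y $ i = 0"
      using nonadjacent[of i j] nonadjacent[of j i] symmetric_mat_entry[OF A, of i j] by auto
    then show ?thesis by (auto simp: X)
  qed simp
  moreover have "X $ i $ i = 0" for i
    using disjoint[of i] by (simp add: X mult.commute)
  moreover have "A ** X = X ** A"
  proof -
    have "(A ** X) $ i $ j = (A *v x) $ i * y $ j + (A *v y) $ i * x $ j" for i j
      by (simp add: matrix_matrix_mult_def matrix_vector_mult_def X algebra_simps
          sum_distrib_left sum.distrib)
    then have "A ** X = 0" using Ax Ay by (simp add: vec_eq_iff)
    moreover have "X ** A = transpose (A ** X)"
      using A \<open>symmetric_mat X\<close> by (simp add: matrix_transpose_mul symmetric_mat_def)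
    ultimately show ?thesis by (simp add: vec_eq_iff transpose_def)
  qed
  ultimately have "X = 0" using ssp unfolding SSP_def by simp
  obtain i j where "x $ i \<noteq> 0" "y $ j \<noteq> 0"
    using \<open>x \<noteq> 0\<close> \<open>y \<noteq> 0\<close> by (metis vec_eq_iff zero_index)
  then have "X $ i $ j \<noteq> 0" using disjoint[of i] by (simp add: X)
  with \<open>X = 0\<close> show False by simp
qed

text \<open>On \<open>U\<close> this is minus the Laplacian of the subgraph induced by \<open>U\<close>.\<close>

definition branch_matrix :: "('n::finite \<Rightarrow> 'n \<Rightarrow> bool) \<Rightarrow> 'n set \<Rightarrow> real^'n^'n" where
  "branch_matrix E U =
     (\<chi> i j. if i = j then - real (card {k \<in> U. E i k}) else if E i j then 1 else 0)"

lemma branch_matrix_in_S_graph: "simple_graph E \<Longrightarrow> branch_matrix E U \<in> S_graph E"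
  unfolding S_graph_def symmetric_mat_def simple_graph_def branch_matrix_def
  by (auto simp: vec_eq_iff transpose_def)

definition indicator_vector :: "'n::finite set \<Rightarrow> real^'n" where
  "indicator_vector S = (\<chi> k. indicator S k)"

lemma branch_matrix_mult_indicator:
  fixes E :: "'n::finite \<Rightarrow> 'n \<Rightarrow> bool"
  assumes E: "simple_graph E" and "B \<subseteq> U" and sep: "separated E B (U - B)"
  shows "(branch_matrix E U *v indicator_vector B) $ i
           = (if i \<in> U then 0 else real (card {k \<in> B. E i k}))"
proof -
  have irrefl: "\<not> E i i" using E unfolding simple_graph_def by blast
  have entry: "branch_matrix E U $ i $ k * c
      = (if k = i then - real (card {k \<in> U. E i k}) * c else 0) + c * of_bool (E i k)" for k c
    using irrefl by (simp add: branch_matrix_def)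
  have "(branch_matrix E U *v indicator_vector B) $ i
      = (\<Sum>k\<in>UNIV. branch_matrix E U $ i $ k * indicator B k)"
    by (simp add: matrix_vector_mult_def indicator_vector_def)
  also have "\<dots> = (\<Sum>k\<in>UNIV. (if k = i then - real (card {k \<in> U. E i k}) * indicator B k else 0)
                      + indicator B k * of_bool (E i k))"
    by (simp only: entry)
  also have "\<dots> = - real (card {k \<in> U. E i k}) * indicator B i + real (card {k \<in> B. E i k})"
  proof -
    have "(\<Sum>k\<in>UNIV. indicator B k * of_bool (E i k)) = (\<Sum>k\<in>UNIV. of_bool (k \<in> B \<and> E i k) :: real)"
      by (intro sum.cong refl) (simp add: indicator_def)
    also have "\<dots> = real (card (UNIV \<inter> {k. k \<in> B \<and> E i k}))"
      by (rule sum_of_bool_eq) simp_all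
    also have "\<dots> = real (card {k \<in> B. E i k})"
      by simp
    finally show ?thesis by (simp add: sum.distrib if_distrib[symmetric])
  qed
  also have "\<dots> = (if i \<in> U then 0 else real (card {k \<in> B. E i k}))"
  proof (cases "i \<in> B")
    case True
    then have "{k \<in> U. E i k} = {k \<in> B. E i k}"
      using sep \<open>B \<subseteq> U\<close> unfolding separated_def by blast
    then show ?thesis using True \<open>B \<subseteq> U\<close> by auto
  next
    case False
    have "i \<in> U \<Longrightarrow> {k \<in> B. E i k} = {}"
      using sep False E unfolding separated_def simple_graph_def by blast
    then show ?thesis using False by simp
  qed
  finally show ?thesis .
qed

lemma zero_if_symmetric_zero_row_sums:
  fixes F :: "'a \<Rightarrow> 'a \<Rightarrow> 'b::linordered_field"
  assumes "finite S" "card S \<le> 3"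
    and sym: "\<And>a b. a \<in> S \<Longrightarrow> b \<in> S \<Longrightarrow> a \<noteq> b \<Longrightarrow> F a b = F b a"
    and row: "\<And>a. a \<in> S \<Longrightarrow> (\<Sum>b\<in>S - {a}. F a b) = 0"
    and "a \<in> S" "b \<in> S" "a \<noteq> b"
  shows "F a b = 0"
proof (cases "S - {a} = {b}")
  case True
  then show ?thesis using row[OF \<open>a \<in> S\<close>] by simp
next
  case False
  then obtain c where c: "c \<in> S" "c \<noteq> a" "c \<noteq> b" using \<open>b \<in> S\<close> \<open>a \<noteq> b\<close> by blast
  then have "card {a, b, c} = 3" using \<open>a \<noteq> b\<close> by simp
  then have S: "S = {a, b, c}"
    using card_seteq[OF \<open>finite S\<close>, of "{a, b, c}"] \<open>card S \<le> 3\<close> \<open>a \<in> S\<close> \<open>b \<in> S\<close> c by auto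
  have "F a b + F a c = 0" "F b a + F b c = 0" "F c a + F c b = 0"
    using row[of a] row[of b] row[of c] c \<open>a \<noteq> b\<close> unfolding S
    by (simp_all add: insert_Diff_if)
  moreover have "F b a = F a b" "F c a = F a c" "F c b = F b c"
    using sym[OF \<open>b \<in> S\<close> \<open>a \<in> S\<close>] sym[OF \<open>c \<in> S\<close> \<open>a \<in> S\<close>] sym[OF \<open>c \<in> S\<close> \<open>b \<in> S\<close>]
      c \<open>a \<noteq> b\<close> by auto
  ultimately show ?thesis by linarith
qed

section \<open>Rooted trees\<close>

locale rooted_tree =
  fixes E :: "'n::finite \<Rightarrow> 'n \<Rightarrow> bool" and r :: 'n
  assumes tree: "is_tree E"
begin

lemma edge_sym: "E x y \<Longrightarrow> E y x"
  using tree unfolding is_tree_def simple_graph_def by blast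

lemma edge_irrefl: "\<not> E x x"
  using tree unfolding is_tree_def simple_graph_def by blast

definition depth :: "'n \<Rightarrow> nat" where
  "depth x = (LEAST n. (E ^^ n) r x)"

lemma relpowp_depth: "(E ^^ depth x) r x"
proof -
  have "E\<^sup>*\<^sup>* r x" using tree unfolding is_tree_def connected_graph_def by blast
  then have "\<exists>n. (E ^^ n) r x" by (simp add: rtranclp_power)
  then show ?thesis unfolding depth_def by (rule LeastI_ex)
qed

lemma depth_le: "(E ^^ n) r x \<Longrightarrow> depth x \<le> n"
  unfolding depth_def by (rule Least_le)

lemma depth_root [simp]: "depth r = 0"
  using depth_le[of 0 r] by simp

lemma depth_eq_0_iff [simp]: "depth x = 0 \<longleftrightarrow> x = r"
  using relpowp_depth[of x] by (auto elim: relpowp_0_E)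

lemma depth_gt_0_iff: "0 < depth x \<longleftrightarrow> x \<noteq> r"
  unfolding neq0_conv[symmetric] by simp

lemma depth_edge: "E x y \<Longrightarrow> depth y \<le> Suc (depth x)"
  using depth_le relpowp_Suc_I[OF relpowp_depth[of x]] by blast

lemma parent_exists: "x \<noteq> r \<Longrightarrow> \<exists>p. E x p \<and> Suc (depth p) = depth x"
proof -
  assume "x \<noteq> r"
  then obtain n where n: "depth x = Suc n" by (cases "depth x") auto
  then have "(E ^^ Suc n) r x" using relpowp_depth[of x] by simp
  then obtain p where p: "(E ^^ n) r p" "E p x" by (auto elim: relpowp_Suc_E)
  then have "Suc (depth p) = depth x" using n depth_le[OF p(1)] depth_edge[OF p(2)] by simp
  then show ?thesis using p(2) edge_sym by blast
qed

definition parent :: "'n \<Rightarrow> 'n" where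
  "parent x = (if x = r then r else (SOME p. E x p \<and> Suc (depth p) = depth x))"

lemma edge_parent: "x \<noteq> r \<Longrightarrow> E x (parent x)"
  unfolding parent_def using someI_ex[OF parent_exists] by auto

lemma depth_parent: "depth (parent x) = depth x - 1"
  unfolding parent_def using someI_ex[OF parent_exists, of x] by auto

lemma connected_to_root_avoiding:
  "z \<noteq> v \<Longrightarrow> depth z \<le> depth v \<Longrightarrow> (\<lambda>a b. E a b \<and> a \<noteq> v \<and> b \<noteq> v)\<^sup>*\<^sup>* z r"
proof (induction "depth z" arbitrary: z)
  case 0
  then show ?case by simp
next
  case (Suc n)
  then have "z \<noteq> r" by auto
  then have edge: "E z (parent z)" and depth: "depth (parent z) = n"
    using edge_parent depth_parent Suc.hyps(2) by auto
  then have "parent z \<noteq> v" using Suc.prems Suc.hyps(2) by auto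
  then have "(\<lambda>a b. E a b \<and> a \<noteq> v \<and> b \<noteq> v)\<^sup>*\<^sup>* (parent z) r"
    using Suc.hyps(1)[OF depth[symmetric]] Suc.prems(2) Suc.hyps(2) depth by simp
  then show ?case
    by (rule converse_rtranclp_into_rtranclp[rotated]) (use edge Suc.prems \<open>parent z \<noteq> v\<close> in simp)
qed

text \<open>Otherwise \<open>y\<close> and \<open>parent x\<close> are two neighbours of \<open>x\<close> joined, through the root,
  by a walk avoiding \<open>x\<close>.\<close>

lemma edge_imp_parent:
  assumes e: "E x y" and le: "depth y \<le> depth x"
  shows "x \<noteq> r \<and> y = parent x"
proof -
  have "y \<noteq> x" using e edge_irrefl by blast
  then have "x \<noteq> r" using le by auto
  let ?R = "\<lambda>a b. E a b \<and> a \<noteq> x \<and> b \<noteq> x"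
  have "?R\<^sup>*\<^sup>* y r" using connected_to_root_avoiding[OF \<open>y \<noteq> x\<close> le] .
  moreover have "?R\<^sup>*\<^sup>* r (parent x)"
  proof -
    have "depth (parent x) < depth x" using depth_parent[of x] \<open>x \<noteq> r\<close> depth_gt_0_iff by simp
    then have "?R\<^sup>*\<^sup>* (parent x) r"
      using connected_to_root_avoiding[of "parent x" x] by fastforce
    moreover have "symp ?R" unfolding symp_def using edge_sym by blast
    ultimately show ?thesis by (rule sympD[OF symp_rtranclp, rotated])
  qed
  ultimately have "?R\<^sup>*\<^sup>* y (parent x)" by (rule rtranclp_trans)
  moreover have "acyclic_graph E" using tree unfolding is_tree_def by blast
  ultimately have "y = parent x"
    using acyclic_neighbours_not_connected_avoiding[of E x y "parent x"] e
      edge_parent[OF \<open>x \<noteq> r\<close>] edge_sym by blast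
  then show ?thesis using \<open>x \<noteq> r\<close> by simp
qed

lemma edge_iff_parent: "E x y \<longleftrightarrow> (x \<noteq> r \<and> y = parent x) \<or> (y \<noteq> r \<and> x = parent y)"
proof
  assume "E x y"
  show "(x \<noteq> r \<and> y = parent x) \<or> (y \<noteq> r \<and> x = parent y)"
  proof (cases "depth y \<le> depth x")
    case True
    then show ?thesis using edge_imp_parent \<open>E x y\<close> by blast
  next
    case False
    then show ?thesis using edge_imp_parent[of y x] edge_sym[OF \<open>E x y\<close>] by simp
  qed
qed (use edge_parent edge_sym in blast)

definition children :: "'n \<Rightarrow> 'n set" where
  "children z = {k. k \<noteq> r \<and> parent k = z}"

lemma children_iff: "k \<in> children z \<longleftrightarrow> k \<noteq> r \<and> parent k = z"
  unfolding children_def by simp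

lemma child_not_root: "k \<in> children z \<Longrightarrow> k \<noteq> r"
  unfolding children_def by simp

lemma parent_child: "k \<in> children z \<Longrightarrow> parent k = z"
  unfolding children_def by simp

lemma depth_child: "k \<in> children z \<Longrightarrow> depth k = Suc (depth z)"
  unfolding children_def using depth_parent[of k] by (cases "depth k") auto

lemma parent_notin_children: "parent z \<notin> children z"
  using depth_child[of "parent z" z] depth_parent[of z] by auto

lemma neighbours_eq: "{k. E z k} = (if z = r then {} else {parent z}) \<union> children z"
  using edge_iff_parent unfolding children_def by auto

lemma children_root: "children r = {k. E r k}"
  using neighbours_eq[of r] by simp

definition ancestor :: "nat \<Rightarrow> 'n \<Rightarrow> 'n" where
  "ancestor k x = (parent ^^ k) x"

lemma ancestor_0 [simp]: "ancestor 0 x = x"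
  unfolding ancestor_def by simp

lemma ancestor_Suc: "ancestor (Suc k) x = parent (ancestor k x)"
  unfolding ancestor_def by simp

lemma ancestor_Suc': "ancestor (Suc k) x = ancestor k (parent x)"
  unfolding ancestor_def by (simp add: funpow_Suc_right del: funpow.simps)

lemma ancestor_add: "ancestor (k + j) x = ancestor k (ancestor j x)"
  unfolding ancestor_def by (simp add: funpow_add)

lemma depth_ancestor: "depth (ancestor k x) = depth x - k"
  by (induction k) (auto simp: ancestor_Suc depth_parent)

definition descendants :: "'n \<Rightarrow> 'n set" where
  "descendants b = {z. \<exists>k. ancestor k z = b}"

lemma self_in_descendants: "b \<in> descendants b"
  unfolding descendants_def by (auto intro: exI[of _ 0])

lemma depth_le_descendant: "z \<in> descendants b \<Longrightarrow> depth b \<le> depth z"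
  unfolding descendants_def using depth_ancestor by fastforce

lemma parent_in_descendants:
  assumes "z \<in> descendants b" "z \<noteq> b"
  shows "parent z \<in> descendants b"
proof -
  obtain k where k: "ancestor k z = b" using assms(1) unfolding descendants_def by blast
  with assms(2) obtain j where "k = Suc j" by (cases k) auto
  then have "ancestor j (parent z) = b" using k by (simp add: ancestor_Suc')
  then show ?thesis unfolding descendants_def by blast
qed

lemma child_in_descendants:
  assumes "z \<in> descendants b" "k \<in> children z"
  shows "k \<in> descendants b"
proof -
  obtain j where "ancestor j z = b" using assms(1) unfolding descendants_def by blast
  then have "ancestor (Suc j) k = b" using assms(2) by (simp add: ancestor_Suc' children_iff)
  then show ?thesis unfolding descendants_def by blast
qed

lemma descendants_nested_or_disjoint:
  assumes "z \<in> descendants a" "z \<in> descendants c"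
  shows "a \<in> descendants c \<or> c \<in> descendants a"
proof -
  obtain i j where i: "ancestor i z = a" and j: "ancestor j z = c"
    using assms unfolding descendants_def by blast
  show ?thesis
  proof (cases "i \<le> j")
    case True
    then have "ancestor (j - i) a = c" using i j ancestor_add[of "j - i" i z] by simp
    then show ?thesis unfolding descendants_def by blast
  next
    case False
    then have "ancestor (i - j) c = a" using i j ancestor_add[of "i - j" j z] by simp
    then show ?thesis unfolding descendants_def by blast
  qed
qed

lemma edge_leaving_descendants:
  assumes z: "z \<in> descendants b" and e: "E z k" and k: "k \<notin> descendants b"
  shows "z = b \<and> k = parent b"
proof -
  have "k \<notin> children z" using z k child_in_descendants by blast
  then have "k = parent z" using e edge_iff_parent children_iff by blast
  moreover have "z = b" using z k \<open>k = parent z\<close> parent_in_descendants by blast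
  ultimately show ?thesis by simp
qed

lemma separated_descendants:
  assumes "a \<noteq> c" "parent a \<notin> descendants c" "parent c \<notin> descendants a"
  shows "separated E (descendants a) (descendants c)"
proof -
  have "a \<notin> descendants c" "c \<notin> descendants a"
    using assms parent_in_descendants by blast+
  then have disjoint: "descendants a \<inter> descendants c = {}"
    using descendants_nested_or_disjoint by blast
  have "\<not> E z z'" if "z \<in> descendants a" "z' \<in> descendants c" for z z'
    using that disjoint assms(2) edge_leaving_descendants[of z a z'] by blast
  then show ?thesis using disjoint unfolding separated_def by blast
qed

lemma parent_notin_descendants: "c \<in> children v \<Longrightarrow> v \<notin> descendants c"
  using depth_le_descendant[of v c] depth_child[of c v] by auto

lemma separated_sibling_descendants:
  assumes a: "a \<in> children v" and c: "c \<in> children v" and "a \<noteq> c"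
  shows "separated E (descendants a) (descendants c)"
proof (rule separated_descendants)
  show "parent a \<notin> descendants c" "parent c \<notin> descendants a"
    using parent_notin_descendants[OF a] parent_notin_descendants[OF c] a c
    by (simp_all add: children_iff)
qed fact

lemma neighbours_in_descendants:
  assumes b: "b \<in> children v" and i: "i \<notin> descendants b"
  shows "{k \<in> descendants b. E i k} = (if i = v then {b} else {})"
proof -
  have bv: "b \<noteq> r" "parent b = v" using b children_iff by auto
  have "k = b \<and> i = v" if "k \<in> descendants b" "E i k" for k
    using edge_leaving_descendants[OF that(1) edge_sym[OF that(2)] i] bv by simp
  moreover have "E v b" using edge_parent[OF bv(1)] edge_sym bv(2) by simp
  ultimately show ?thesis using self_in_descendants[of b] by (cases "i = v") auto
qed

definition leg :: "'n \<Rightarrow> 'n" where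
  "leg x = ancestor (depth x - 1) x"

lemma leg_in_children_root:
  assumes "x \<noteq> r"
  shows "leg x \<in> children r"
proof -
  have "0 < depth x" using assms depth_gt_0_iff by simp
  then have "depth (leg x) = 1" unfolding leg_def by (simp add: depth_ancestor)
  moreover have "parent (leg x) = ancestor (depth x) x"
    using \<open>0 < depth x\<close> ancestor_Suc[of "depth x - 1" x] unfolding leg_def by simp
  moreover have "depth (ancestor (depth x) x) = 0" by (simp add: depth_ancestor)
  ultimately show ?thesis unfolding children_iff by auto
qed

lemma in_descendants_leg: "x \<in> descendants (leg x)"
  unfolding descendants_def leg_def by blast

lemma leg_ancestor: "k < depth x \<Longrightarrow> leg (ancestor k x) = leg x"
  unfolding leg_def using ancestor_add[of "depth x - 1 - k" k x] by (simp add: depth_ancestor)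

lemma leg_parent: "2 \<le> depth x \<Longrightarrow> leg (parent x) = leg x"
  using leg_ancestor[of 1 x] by (simp add: ancestor_Suc)

lemma leg_child: "k \<in> children z \<Longrightarrow> z \<noteq> r \<Longrightarrow> leg k = leg z"
  using leg_parent[of k] depth_child[of k z] depth_gt_0_iff[of z] parent_child[of k z] by simp

lemma leg_root_child: "b \<in> children r \<Longrightarrow> leg b = b"
  unfolding leg_def using depth_child[of b r] by simp

definition max_depth :: nat where
  "max_depth = Max (range depth)"

lemma depth_le_max_depth: "depth y \<le> max_depth"
  unfolding max_depth_def by (rule Max_ge) auto

lemma simple_graph: "simple_graph E"
  using tree unfolding is_tree_def by blast

lemma sum_row_S_graph:
  assumes A: "A \<in> S_graph E"
  shows "(\<Sum>k\<in>UNIV. A $ z $ k * f k)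
    = A $ z $ z * f z + (if z = r then 0 else A $ z $ parent z * f (parent z))
      + (\<Sum>k\<in>children z. A $ z $ k * f k)"
proof -
  let ?P = "if z = r then {} else {parent z}"
  have N: "?P \<union> children z = {k. E z k}" using neighbours_eq by simp
  then have "z \<notin> ?P \<union> children z" using edge_irrefl by auto
  have "(\<Sum>k\<in>UNIV. A $ z $ k * f k) = (\<Sum>k\<in>insert z (?P \<union> children z). A $ z $ k * f k)"
    using A N unfolding S_graph_def by (intro sum.mono_neutral_right) auto
  also have "\<dots> = A $ z $ z * f z + (\<Sum>k\<in>?P. A $ z $ k * f k) + (\<Sum>k\<in>children z. A $ z $ k * f k)"
    using \<open>z \<notin> ?P \<union> children z\<close> parent_notin_children
    by (simp add: sum.union_disjoint add.assoc)
  finally show ?thesis by simp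
qed

end

section \<open>Branches that violate the SSP\<close>

context rooted_tree begin

lemma branch_matrix_mult_sibling_difference:
  assumes b1: "b1 \<in> children v" and b2: "b2 \<in> children v" and "b1 \<noteq> b2"
    and sep: "separated E (descendants b1 \<union> descendants b2) W"
  defines "U \<equiv> descendants b1 \<union> descendants b2 \<union> W"
  shows "branch_matrix E U *v (indicator_vector (descendants b1) - indicator_vector (descendants b2)) = 0"
proof -
  have U: "descendants b1 \<subseteq> U" "descendants b2 \<subseteq> U" unfolding U_def by auto
  have "separated E (descendants b1) (descendants b2 \<union> W)" "separated E (descendants b2) (descendants b1 \<union> W)"
    using separated_sibling_descendants b1 b2 \<open>b1 \<noteq> b2\<close> sep by auto
  moreover have "U - descendants b1 \<subseteq> descendants b2 \<union> W" "U - descendants b2 \<subseteq> descendants b1 \<union> W"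
    unfolding U_def by blast+
  ultimately have sep1: "separated E (descendants b1) (U - descendants b1)"
    and sep2: "separated E (descendants b2) (U - descendants b2)"
    by (blast intro: separated_mono)+
  have "(branch_matrix E U *v indicator_vector (descendants b1)) $ i
      = (branch_matrix E U *v indicator_vector (descendants b2)) $ i" for i
  proof (cases "i \<in> U")
    case False
    then have "i \<notin> descendants b1" "i \<notin> descendants b2" using U by auto
    then show ?thesis
      using branch_matrix_mult_indicator[OF simple_graph U(1) sep1, of i]
        branch_matrix_mult_indicator[OF simple_graph U(2) sep2, of i]
        neighbours_in_descendants[OF b1] neighbours_in_descendants[OF b2] by simp
  qed (simp add: branch_matrix_mult_indicator[OF simple_graph U(1) sep1]
         branch_matrix_mult_indicator[OF simple_graph U(2) sep2])
  then show ?thesis by (simp add: matrix_vector_mult_diff_distrib vec_eq_iff)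
qed

lemma not_in_G_SSP_if_separated_sibling_pairs:
  assumes b: "b1 \<in> children v" "b2 \<in> children v" "b1 \<noteq> b2"
    and c: "c1 \<in> children w" "c2 \<in> children w" "c1 \<noteq> c2"
    and sep: "separated E (descendants b1 \<union> descendants b2) (descendants c1 \<union> descendants c2)"
  shows "\<not> in_G_SSP E"
proof
  assume G: "in_G_SSP E"
  define B where "B = descendants b1 \<union> descendants b2"
  define C where "C = descendants c1 \<union> descendants c2"
  define x where "x = indicator_vector (descendants b1) - indicator_vector (descendants b2)"
  define y where "y = indicator_vector (descendants c1) - indicator_vector (descendants c2)"
  let ?A = "branch_matrix E (B \<union> C)"
  have sep_b: "separated E (descendants b1) (descendants b2)"
    using separated_sibling_descendants b by auto
  have sep_c: "separated E (descendants c1) (descendants c2)"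
    using separated_sibling_descendants c by auto
  have sep_BC: "separated E B C" and sep_CB: "separated E C B"
    using sep separated_sym[OF simple_graph] unfolding B_def C_def by auto
  have Ax: "?A *v x = 0"
    using branch_matrix_mult_sibling_difference[OF b sep] unfolding x_def B_def C_def .
  have Ay: "?A *v y = 0"
    using branch_matrix_mult_sibling_difference[OF c sep_CB[unfolded C_def]]
    unfolding y_def B_def C_def by (simp add: Un_ac)
  have x_supp: "x $ i \<noteq> 0 \<Longrightarrow> i \<in> B" and y_supp: "y $ i \<noteq> 0 \<Longrightarrow> i \<in> C" for i
    unfolding x_def y_def B_def C_def by (auto simp: indicator_vector_def indicator_def)
  have xy: "x $ i * y $ j = 0" if "i = j \<or> ?A $ i $ j \<noteq> 0" for i j
  proof (rule ccontr)
    assume "x $ i * y $ j \<noteq> 0"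
    then have "i \<in> B" "j \<in> C" using x_supp y_supp by auto
    moreover have "i = j \<or> E i j" using that by (auto simp: branch_matrix_def split: if_splits)
    ultimately show False using sep_BC unfolding separated_def by blast
  qed
  have "b1 \<notin> descendants b2" "c1 \<notin> descendants c2"
    using sep_b sep_c self_in_descendants unfolding separated_def by blast+
  then have "x $ b1 = 1" "y $ c1 = 1"
    unfolding x_def y_def by (simp_all add: indicator_vector_def self_in_descendants)
  then have "x \<noteq> 0" "y \<noteq> 0" by auto
  have A: "?A \<in> S_graph E" by (rule branch_matrix_in_S_graph[OF simple_graph])
  then have "symmetric_mat ?A" unfolding S_graph_def by blast
  then have "\<not> SSP ?A"
    by (rule not_SSP_if_null_vectors[OF _ Ax Ay _ _ \<open>x \<noteq> 0\<close> \<open>y \<noteq> 0\<close>]) (simp_all add: xy)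
  then show False using G A unfolding in_G_SSP_def by blast
qed

lemma not_in_G_SSP_if_four_children:
  assumes "4 \<le> card (children v)"
  shows "\<not> in_G_SSP E"
proof -
  obtain T where T: "T \<subseteq> children v" "card T = 4" using ex_card[OF assms] by blast
  then obtain a T' where T': "T = insert a T'" "a \<notin> T'" "card T' = 3"
    using card_eq_SucD[of T 3] by auto
  then obtain b c e where "T' = {b, c, e}" "distinct [b, c, e]"
    by (auto simp: card_3_iff)
  then have abce: "a \<in> children v" "b \<in> children v" "c \<in> children v" "e \<in> children v"
    and "distinct [a, b, c, e]"
    using T(1) T'(1,2) by auto
  then have "separated E (descendants a \<union> descendants b) (descendants c \<union> descendants e)"
    using separated_sibling_descendants by simp
  then show ?thesis
    using not_in_G_SSP_if_separated_sibling_pairs abce \<open>distinct [a, b, c, e]\<close> by simp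
qed

lemma separated_descendants_root_child:
  assumes a: "a \<in> children r" and c: "c \<in> children w" and "w \<noteq> r" "w \<notin> descendants a"
  shows "separated E (descendants a) (descendants c)"
proof (rule separated_descendants)
  have "depth a = 1" "depth c = Suc (depth w)" "0 < depth w"
    using depth_child[OF a] depth_child[OF c] \<open>w \<noteq> r\<close> depth_gt_0_iff by auto
  then show "a \<noteq> c" by auto
  show "parent a \<notin> descendants c"
    using a \<open>depth c = Suc (depth w)\<close> depth_le_descendant[of r c] by (auto simp: children_iff)
  show "parent c \<notin> descendants a" using c \<open>w \<notin> descendants a\<close> by (simp add: children_iff)
qed

lemma not_in_G_SSP_if_two_branching_vertices:
  assumes "card (children r) = 3" "w \<noteq> r" "card (children w) = 2"
  shows "\<not> in_G_SSP E"
proof -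
  define a0 where "a0 = leg w"
  have a0: "a0 \<in> children r" "w \<in> descendants a0"
    using leg_in_children_root[OF \<open>w \<noteq> r\<close>] in_descendants_leg unfolding a0_def by auto
  then have "card (children r - {a0}) = 2" using assms(1) by (simp add: card_Diff_singleton)
  then obtain a a' where a: "children r - {a0} = {a, a'}" "a \<noteq> a'"
    by (auto simp: card_2_iff)
  have "a \<in> children r" "a' \<in> children r" using a(1) by auto
  have "w \<notin> descendants a" "w \<notin> descendants a'"
    using a a0 separated_sibling_descendants[of _ r a0] unfolding separated_def by blast+
  obtain c c' where c: "children w = {c, c'}" "c \<noteq> c'"
    using assms(3) by (auto simp: card_2_iff)
  have "separated E (descendants a \<union> descendants a') (descendants c \<union> descendants c')"
    using separated_descendants_root_child \<open>a \<in> children r\<close> \<open>a' \<in> children r\<close> c \<open>w \<noteq> r\<close>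
      \<open>w \<notin> descendants a\<close> \<open>w \<notin> descendants a'\<close> by auto
  then show ?thesis
    using not_in_G_SSP_if_separated_sibling_pairs[of a r a' c w c'] a c by auto
qed

end

lemma not_in_G_SSP_if_degree_ge_4:
  assumes "is_tree E" "4 \<le> degree E v"
  shows "\<not> in_G_SSP E"
proof -
  interpret rooted_tree E v by (rule rooted_tree.intro) fact
  show ?thesis
    using not_in_G_SSP_if_four_children[of v] assms(2) children_root unfolding degree_def by simp
qed

lemma not_in_G_SSP_if_two_degree_3:
  assumes "is_tree E" "u \<noteq> w" "degree E u = 3" "degree E w = 3"
  shows "\<not> in_G_SSP E"
proof -
  interpret rooted_tree E u by (rule rooted_tree.intro) fact
  have "{k. E w k} = insert (parent w) (children w)"
    using neighbours_eq[of w] \<open>u \<noteq> w\<close> by auto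
  then have "card (children w) = 2"
    using assms(4) parent_notin_children[of w] unfolding degree_def by simp
  then show ?thesis
    using not_in_G_SSP_if_two_branching_vertices[of w] assms(2,3) children_root unfolding degree_def
    by simp
qed

section \<open>Spiders with at most three legs\<close>

locale spider = rooted_tree E r for E :: "'n::finite \<Rightarrow> 'n \<Rightarrow> bool" and r +
  assumes degree_le_2: "z \<noteq> r \<Longrightarrow> degree E z \<le> 2"
    and degree_root_le_3: "degree E r \<le> 3"
begin

lemma card_children_root: "card (children r) \<le> 3"
  using degree_root_le_3 children_root unfolding degree_def by simp

lemma children_subsingleton:
  assumes "z \<noteq> r" "k \<in> children z" "k' \<in> children z"
  shows "k = k'"
proof -
  have "{k. E z k} = insert (parent z) (children z)"
    using neighbours_eq[of z] assms(1) by auto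
  then have "Suc (card (children z)) \<le> 2"
    using degree_le_2[OF assms(1)] parent_notin_children[of z] unfolding degree_def by simp
  then show ?thesis using assms(2,3) card_le_Suc0_iff_eq[of "children z"] by auto
qed

lemma children_cases: "z \<noteq> r \<Longrightarrow> children z = {} \<or> (\<exists>k. children z = {k})"
  using children_subsingleton by blast

lemma leg_depth_inj:
  "x \<noteq> r \<Longrightarrow> y \<noteq> r \<Longrightarrow> leg x = leg y \<Longrightarrow> depth x = depth y \<Longrightarrow> x = y"
proof (induction "depth x" arbitrary: x y)
  case 0
  then show ?case by (metis depth_eq_0_iff)
next
  case (Suc n)
  note IH = Suc.hyps(1) and depth_x = Suc.hyps(2)
    and x = Suc.prems(1) and y = Suc.prems(2) and legs = Suc.prems(3) and depths = Suc.prems(4)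
  show ?case
  proof (cases "n = 0")
    case True
    then have "leg x = x" "leg y = y" using depth_x depths by (simp_all add: leg_def)
    then show ?thesis using legs by metis
  next
    case False
    have depth_parents: "n = depth (parent x)" "n = depth (parent y)"
      using depth_parent[of x] depth_parent[of y] depth_x depths by simp_all
    then have "parent x \<noteq> r" "parent y \<noteq> r" using False by auto
    moreover have "leg (parent x) = leg (parent y)"
      using leg_parent[of x] leg_parent[of y] depth_x depths False legs by simp
    ultimately have "parent x = parent y" using IH depth_parents by metis
    then have "x \<in> children (parent x)" "y \<in> children (parent x)"
      using x y by (simp_all add: children_iff)
    then show ?thesis using children_subsingleton[OF \<open>parent x \<noteq> r\<close>] by blast
  qed
qed

lemma leg_level_eq_singleton:
  "z \<noteq> r \<Longrightarrow> {z'. z' \<noteq> r \<and> leg z' = leg z \<and> depth z' = depth z} = {z}"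
  using leg_depth_inj by blast

lemma ancestor_on_leg:
  assumes "x = r \<or> leg x = leg y" "depth x \<le> depth y"
  shows "ancestor (depth y - depth x) y = x"
proof -
  let ?z = "ancestor (depth y - depth x) y"
  have depth_z: "depth ?z = depth x" using assms(2) by (simp add: depth_ancestor)
  show ?thesis
  proof (cases "x = r")
    case False
    then have "0 < depth x" using depth_gt_0_iff by simp
    then have "?z \<noteq> r" "leg ?z = leg y" using depth_z assms(2) leg_ancestor by auto
    then show ?thesis using leg_depth_inj[of ?z x] False assms(1) depth_z by simp
  qed (use depth_z in simp)
qed

lemma ancestor_in_children_on_leg:
  assumes "x = r \<or> leg x = leg z" "depth x < depth z"
  shows "ancestor (depth z - Suc (depth x)) z \<in> children x"
proof -
  let ?w = "ancestor (depth z - Suc (depth x)) z"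
  have "parent ?w = ancestor (depth z - depth x) z"
    using assms(2) ancestor_Suc[of "depth z - Suc (depth x)" z] by (simp add: Suc_diff_Suc)
  also have "\<dots> = x" using ancestor_on_leg assms by simp
  finally show ?thesis
    using assms(2) depth_ancestor[of "depth z - Suc (depth x)" z] unfolding children_iff by auto
qed

definition spider_dist :: "'n \<Rightarrow> 'n \<Rightarrow> nat" where
  "spider_dist x y =
     (if x = r \<or> y = r \<or> leg x = leg y
      then (if depth x \<le> depth y then depth y - depth x else depth x - depth y)
      else depth x + depth y)"

lemma spider_dist_on_leg:
  "x = r \<or> leg x = leg y \<Longrightarrow> depth x \<le> depth y \<Longrightarrow> spider_dist x y = depth y - depth x"
  unfolding spider_dist_def by auto

lemma spider_dist_across_legs:
  "x \<noteq> r \<Longrightarrow> y \<noteq> r \<Longrightarrow> leg x \<noteq> leg y \<Longrightarrow> spider_dist x y = depth x + depth y"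
  unfolding spider_dist_def by simp

lemma spider_dist_sym: "spider_dist x y = spider_dist y x"
  unfolding spider_dist_def by auto

lemma spider_dist_parent_across_legs:
  assumes "x \<noteq> r" "y \<noteq> r" "leg x \<noteq> leg y"
  shows "spider_dist (parent x) y = depth x + depth y - 1"
proof (cases "parent x = r")
  case True
  then have "depth x = 1" using depth_parent[of x] assms(1) depth_gt_0_iff[of x] by simp
  then show ?thesis using True spider_dist_on_leg[of r y] by simp
next
  case False
  then have "2 \<le> depth x" using depth_parent[of x] depth_gt_0_iff[of "parent x"] by simp
  then have "leg (parent x) = leg x" by (rule leg_parent)
  then show ?thesis
    using spider_dist_across_legs[OF False assms(2)] assms(3) depth_parent[of x] \<open>2 \<le> depth x\<close>
    by simp
qed

end

locale spider_ssp_witness = spider E r for E :: "'n::finite \<Rightarrow> 'n \<Rightarrow> bool" and r +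
  fixes A X :: "real^'n^'n"
  assumes A: "A \<in> S_graph E" and X_symmetric: "symmetric_mat X"
    and A_X_disjoint: "\<And>i j. A $ i $ j * X $ i $ j = 0" and X_diag: "\<And>i. X $ i $ i = 0"
    and commute: "A ** X - X ** A = 0"
begin

lemma A_sym: "A $ j $ i = A $ i $ j"
  using A symmetric_mat_entry unfolding S_graph_def by blast

lemma X_sym: "X $ j $ i = X $ i $ j"
  using X_symmetric by (rule symmetric_mat_entry)

lemma A_edge: "E i j \<Longrightarrow> A $ i $ j \<noteq> 0"
  using A edge_irrefl unfolding S_graph_def by (metis (mono_tags, lifting) mem_Collect_eq)

lemma X_edge: "E i j \<Longrightarrow> X $ i $ j = 0"
  using A_X_disjoint A_edge by (metis mult_eq_0_iff)

lemma commute_tree: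
  "A $ p $ p * X $ p $ q + (if p = r then 0 else A $ p $ parent p * X $ parent p $ q)
     + (\<Sum>k\<in>children p. A $ p $ k * X $ k $ q)
   = A $ q $ q * X $ p $ q + (if q = r then 0 else A $ q $ parent q * X $ p $ parent q)
     + (\<Sum>k\<in>children q. A $ q $ k * X $ p $ k)"
proof -
  have "(A ** X) $ p $ q = (X ** A) $ p $ q" using commute by simp
  then have "(\<Sum>k\<in>UNIV. A $ p $ k * X $ k $ q) = (\<Sum>k\<in>UNIV. A $ q $ k * X $ p $ k)"
    by (simp add: matrix_matrix_mult_def A_sym[of _ q] mult.commute)
  then show ?thesis
    unfolding sum_row_S_graph[OF A, of p "\<lambda>k. X $ k $ q"] sum_row_S_graph[OF A, of q "\<lambda>k. X $ p $ k"] .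
qed

definition path_product :: "'n \<Rightarrow> real" where
  "path_product x = (\<Prod>i<depth x. A $ ancestor i x $ ancestor (Suc i) x)"

lemma path_product_root: "path_product r = 1"
  unfolding path_product_def by simp

lemma path_product_parent:
  assumes "x \<noteq> r"
  shows "path_product x = A $ x $ parent x * path_product (parent x)"
proof -
  obtain n where n: "depth x = Suc n" using assms by (cases "depth x") auto
  then have "depth (parent x) = n" using depth_parent by simp
  have "path_product x = A $ ancestor 0 x $ ancestor (Suc 0) x
      * (\<Prod>i<n. A $ ancestor (Suc i) x $ ancestor (Suc (Suc i)) x)"
    unfolding path_product_def n by (rule prod.lessThan_Suc_shift)
  also have "(\<Prod>i<n. A $ ancestor (Suc i) x $ ancestor (Suc (Suc i)) x) = path_product (parent x)"
    unfolding path_product_def \<open>depth (parent x) = n\<close> by (simp add: ancestor_Suc')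
  finally show ?thesis by (simp add: ancestor_Suc)
qed

lemma path_product_child: "k \<in> children z \<Longrightarrow> path_product k = A $ z $ k * path_product z"
  using path_product_parent[of k] child_not_root parent_child A_sym by metis

lemma path_product_nonzero: "path_product x \<noteq> 0"
proof (induction "depth x" arbitrary: x)
  case 0
  then show ?case using path_product_root by (metis depth_eq_0_iff one_neq_zero)
next
  case (Suc n)
  then have "x \<noteq> r" by (metis depth_eq_0_iff nat.distinct(1))
  moreover have "path_product (parent x) \<noteq> 0" using Suc depth_parent[of x] by simp
  ultimately show ?case using path_product_parent A_edge edge_parent by simp
qed

definition scaled_X :: "'n \<Rightarrow> 'n \<Rightarrow> real" where
  "scaled_X x y = X $ x $ y * path_product x * path_product y"

lemma scaled_X_sym: "scaled_X x y = scaled_X y x"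
  unfolding scaled_X_def using X_sym[of x y] by simp

text \<open>\<open>leg_value d a b\<close> is \<open>scaled_X z b\<close> for the vertex \<open>z\<close> of depth \<open>d - 1\<close> on the leg
  \<open>a\<close>, and \<open>0\<close> if the leg is shorter (the sum has at most one term).\<close>

definition leg_value :: "nat \<Rightarrow> 'n \<Rightarrow> 'n \<Rightarrow> real" where
  "leg_value d a b = (\<Sum>z | z \<noteq> r \<and> leg z = a \<and> depth z = d - 1. scaled_X z b)"

context
  fixes d :: nat
  assumes X_zero_if_dist_less: "\<And>x y. spider_dist x y < d \<Longrightarrow> X $ x $ y = 0" and "2 \<le> d"
begin

lemma X_zero_on_leg_if_dist_less:
  "x = r \<or> leg x = leg y \<Longrightarrow> depth x \<le> depth y \<Longrightarrow> depth y < depth x + d \<Longrightarrow> X $ x $ y = 0"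
  using X_zero_if_dist_less spider_dist_on_leg by simp

text \<open>Downward induction on the depth of \<open>y\<close>: with \<open>p\<close> the neighbour of \<open>x\<close> towards \<open>y\<close>,
  the entry \<open>(p, y)\<close> of \<open>AX = XA\<close> reduces to \<open>A\<^sub>p\<^sub>x X\<^sub>x\<^sub>y = 0\<close>.\<close>

lemma X_zero_along_leg:
  "x = r \<or> leg x = leg y \<Longrightarrow> depth y = depth x + d \<Longrightarrow> X $ x $ y = 0"
proof (induction "max_depth - depth y" arbitrary: x y rule: less_induct)
  case less
  note on_leg = less.prems(1) and depth_y = less.prems(2)
  have "y \<noteq> r" using depth_y \<open>2 \<le> d\<close> by auto
  define p where "p = ancestor (d - 1) y"
  have depth_p: "depth p = Suc (depth x)"
    unfolding p_def using depth_y \<open>2 \<le> d\<close> by (simp add: depth_ancestor)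
  then have "p \<noteq> r" by auto
  have leg_p: "leg p = leg y"
    unfolding p_def using depth_y \<open>2 \<le> d\<close> by (intro leg_ancestor) simp
  have "parent p = ancestor (depth y - depth x) y"
    unfolding p_def using depth_y \<open>2 \<le> d\<close> ancestor_Suc[of "d - 1" y] by simp
  then have parent_p: "parent p = x" using ancestor_on_leg[OF on_leg] depth_y by simp
  have "X $ p $ y = 0"
    using X_zero_on_leg_if_dist_less[of p y] leg_p depth_p depth_y \<open>2 \<le> d\<close> by simp
  moreover have "X $ k $ y = 0" if "k \<in> children p" for k
    using X_zero_on_leg_if_dist_less[of k y] leg_child[OF that \<open>p \<noteq> r\<close>] leg_p depth_child[OF that]
      depth_p depth_y \<open>2 \<le> d\<close> by simp
  moreover have "X $ p $ parent y = 0"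
    using X_zero_on_leg_if_dist_less[of p "parent y"] leg_parent[of y] leg_p depth_parent[of y]
      depth_p depth_y \<open>2 \<le> d\<close> by simp
  moreover have "X $ p $ k = 0" if "k \<in> children y" for k
  proof (rule less.hyps)
    show "max_depth - depth k < max_depth - depth y"
      using depth_child[OF that] depth_le_max_depth[of k] by simp
    show "p = r \<or> leg p = leg k" using leg_child[OF that \<open>y \<noteq> r\<close>] leg_p by simp
    show "depth k = depth p + d" using depth_child[OF that] depth_p depth_y by simp
  qed
  ultimately have "A $ p $ x * X $ x $ y = 0"
    using commute_tree[of p y] \<open>p \<noteq> r\<close> \<open>y \<noteq> r\<close> parent_p by simp
  moreover have "A $ p $ x \<noteq> 0" using A_edge edge_parent[OF \<open>p \<noteq> r\<close>] parent_p by simp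
  ultimately show ?case by simp
qed

lemma X_zero_across_legs_if_dist_less:
  "x \<noteq> r \<Longrightarrow> y \<noteq> r \<Longrightarrow> leg x \<noteq> leg y \<Longrightarrow> depth x + depth y < d \<Longrightarrow> X $ x $ y = 0"
  using X_zero_if_dist_less spider_dist_across_legs by simp

text \<open>The entry \<open>(x, parent y)\<close> of \<open>AX = XA\<close>; the only child of \<open>parent y\<close> is \<open>y\<close>.\<close>

lemma scaled_X_slide:
  assumes x: "x \<noteq> r" and y: "y \<noteq> r" and legs: "leg x \<noteq> leg y"
    and depths: "depth x + depth y = d" and "2 \<le> depth y"
  shows "scaled_X x y = (\<Sum>k\<in>children x. scaled_X k (parent y))"
proof -
  define q where "q = parent y"
  have "q \<noteq> r" "depth q = depth y - 1" "leg q = leg y"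
    unfolding q_def using depth_parent[of y] \<open>2 \<le> depth y\<close> leg_parent by auto
  have "y \<in> children q" unfolding q_def using y by (simp add: children_iff)
  then have children_q: "children q = {y}" using children_subsingleton[OF \<open>q \<noteq> r\<close>] by blast
  have "X $ x $ q = 0"
    using X_zero_across_legs_if_dist_less[OF x \<open>q \<noteq> r\<close>] legs \<open>leg q = leg y\<close> \<open>depth q = depth y - 1\<close>
      depths \<open>2 \<le> depth y\<close> by simp
  moreover have "X $ parent x $ q = 0"
    using X_zero_if_dist_less spider_dist_parent_across_legs[OF x \<open>q \<noteq> r\<close>] legs \<open>leg q = leg y\<close>
      \<open>depth q = depth y - 1\<close> depths \<open>2 \<le> depth y\<close> by simp
  moreover have "X $ x $ parent q = 0"
    using X_zero_if_dist_less spider_dist_parent_across_legs[OF \<open>q \<noteq> r\<close> x] spider_dist_sym legs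
      \<open>leg q = leg y\<close> \<open>depth q = depth y - 1\<close> depths \<open>2 \<le> depth y\<close> by simp
  ultimately have "(\<Sum>k\<in>children x. A $ x $ k * X $ k $ q) = A $ q $ y * X $ x $ y"
    using commute_tree[of x q] x \<open>q \<noteq> r\<close> children_q by simp
  then have "(\<Sum>k\<in>children x. A $ x $ k * X $ k $ q) * path_product x * path_product q
      = X $ x $ y * path_product x * (A $ q $ y * path_product q)"
    by simp
  also have "A $ q $ y * path_product q = path_product y"
    using path_product_child[OF \<open>y \<in> children q\<close>] by simp
  also have "(\<Sum>k\<in>children x. A $ x $ k * X $ k $ q) * path_product x * path_product q
      = (\<Sum>k\<in>children x. scaled_X k q)"
    unfolding scaled_X_def sum_distrib_right
    by (intro sum.cong refl) (simp add: path_product_child mult_ac)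
  finally show ?thesis unfolding scaled_X_def q_def by simp
qed

text \<open>The entry \<open>(x, r)\<close> of \<open>AX = XA\<close>.\<close>

lemma scaled_X_root_row:
  assumes x: "x \<noteq> r" and depth_x: "depth x = d - 1"
  shows "(\<Sum>b\<in>children r - {leg x}. scaled_X x b) = 0"
proof -
  have "0 < depth x" using x depth_gt_0_iff by simp
  have "X $ x $ r = 0"
    using X_zero_on_leg_if_dist_less[of r x] X_sym depth_x \<open>2 \<le> d\<close> by simp
  moreover have "X $ parent x $ r = 0"
    using X_zero_on_leg_if_dist_less[of r "parent x"] X_sym depth_parent[of x] depth_x \<open>2 \<le> d\<close> by simp
  moreover have "X $ k $ r = 0" if "k \<in> children x" for k
    using X_zero_along_leg[of r k] X_sym depth_child[OF that] depth_x \<open>2 \<le> d\<close> by simp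
  ultimately have "(\<Sum>b\<in>children r. A $ r $ b * X $ x $ b) = 0"
    using commute_tree[of x r] x by simp
  moreover have "leg x \<in> children r" using leg_in_children_root[OF x] .
  moreover have "X $ x $ leg x = 0"
    using X_zero_on_leg_if_dist_less[of "leg x" x] X_sym leg_root_child[OF \<open>leg x \<in> children r\<close>]
      depth_child[OF \<open>leg x \<in> children r\<close>] depth_x \<open>0 < depth x\<close> \<open>2 \<le> d\<close> by simp
  ultimately have "(\<Sum>b\<in>children r - {leg x}. A $ r $ b * X $ x $ b) = 0"
    by (simp add: sum.remove)
  moreover have "scaled_X x b = A $ r $ b * X $ x $ b * path_product x" if "b \<in> children r" for b
    unfolding scaled_X_def using path_product_child[OF that] path_product_root by simp
  ultimately show ?thesis by (simp add: sum_distrib_right[symmetric])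
qed

lemma scaled_X_eq_leg_value:
  "x \<noteq> r \<Longrightarrow> y \<noteq> r \<Longrightarrow> leg x \<noteq> leg y \<Longrightarrow> depth x + depth y = d
     \<Longrightarrow> scaled_X x y = leg_value d (leg x) (leg y)"
proof (induction "depth y" arbitrary: x y)
  case 0
  then show ?case by (metis depth_eq_0_iff)
next
  case (Suc m)
  note IH = Suc.hyps(1) and depth_y = Suc.hyps(2)
    and x = Suc.prems(1) and y = Suc.prems(2) and legs = Suc.prems(3) and depths = Suc.prems(4)
  show ?case
  proof (cases "m = 0")
    case True
    then have "leg y = y" using depth_y by (simp add: leg_def)
    moreover have "depth x = d - 1" using True depth_y depths by simp
    ultimately show ?thesis
      unfolding leg_value_def using leg_level_eq_singleton[OF x] by simp
  next
    case False
    then have "2 \<le> depth y" using depth_y by simp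
    then have py: "parent y \<noteq> r" "leg (parent y) = leg y" "depth (parent y) = m"
      using depth_parent[of y] depth_y leg_parent by auto
    consider "children x = {}" | k where "children x = {k}" using children_cases[OF x] by blast
    then show ?thesis
    proof cases
      case 1
      have no_vertex: "{z. z \<noteq> r \<and> leg z = leg x \<and> depth z = d - 1} = {}"
      proof (intro equals0I)
        fix z assume "z \<in> {z. z \<noteq> r \<and> leg z = leg x \<and> depth z = d - 1}"
        then have "x = r \<or> leg x = leg z" "depth x < depth z"
          using depths \<open>2 \<le> depth y\<close> by auto
        then show False using ancestor_in_children_on_leg 1 by blast
      qed
      then show ?thesis
        using scaled_X_slide[OF x y legs depths \<open>2 \<le> depth y\<close>] 1
        unfolding leg_value_def no_vertex by simp
    next
      case 2
      then have "k \<in> children x" by simp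
      then have "scaled_X k (parent y) = leg_value d (leg k) (leg (parent y))"
        using IH[of "parent y" k] py child_not_root leg_child[of k x] x legs depths depth_child depth_y
        by simp
      then show ?thesis
        using scaled_X_slide[OF x y legs depths \<open>2 \<le> depth y\<close>] 2 py leg_child[of k x] x by simp
    qed
  qed
qed

lemma leg_value_sym_if_reached:
  assumes a: "a \<in> children r" and b: "b \<in> children r" and "a \<noteq> b"
    and z: "z \<noteq> r" "leg z = a" "depth z = d - 1"
  shows "leg_value d a b = leg_value d b a"
proof -
  have "leg_value d a b = scaled_X z b"
    unfolding leg_value_def using leg_level_eq_singleton[OF z(1)] z by simp
  also have "\<dots> = scaled_X b z" by (rule scaled_X_sym)
  also have "\<dots> = leg_value d (leg b) (leg z)"
    using scaled_X_eq_leg_value[of b z] child_not_root[OF b] z leg_root_child[OF b] depth_child[OF b]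
      \<open>a \<noteq> b\<close> \<open>2 \<le> d\<close> by simp
  finally show ?thesis using leg_root_child[OF b] z(2) by simp
qed

lemma leg_value_sym:
  assumes "a \<in> children r" "b \<in> children r" "a \<noteq> b"
  shows "leg_value d a b = leg_value d b a"
proof (cases "\<exists>z. z \<noteq> r \<and> leg z = a \<and> depth z = d - 1")
  case True
  then obtain z where "z \<noteq> r" "leg z = a" "depth z = d - 1" by blast
  then show ?thesis using leg_value_sym_if_reached[OF assms] by blast
next
  case not_a: False
  show ?thesis
  proof (cases "\<exists>z. z \<noteq> r \<and> leg z = b \<and> depth z = d - 1")
    case True
    then obtain z where "z \<noteq> r" "leg z = b" "depth z = d - 1" by blast
    then show ?thesis using leg_value_sym_if_reached[OF assms(2,1)] assms(3) by fastforce
  next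
    case False
    then have no_vertex: "{z. z \<noteq> r \<and> leg z = a \<and> depth z = d - 1} = {}"
      "{z. z \<noteq> r \<and> leg z = b \<and> depth z = d - 1} = {}"
      using not_a by auto
    show ?thesis unfolding leg_value_def no_vertex by simp
  qed
qed

lemma leg_value_row_sum:
  assumes "a \<in> children r"
  shows "(\<Sum>b\<in>children r - {a}. leg_value d a b) = 0"
proof -
  have "(\<Sum>b\<in>children r - {a}. leg_value d a b)
      = (\<Sum>z | z \<noteq> r \<and> leg z = a \<and> depth z = d - 1. \<Sum>b\<in>children r - {a}. scaled_X z b)"
    unfolding leg_value_def by (rule sum.swap)
  also have "\<dots> = 0"
    using scaled_X_root_row by (intro sum.neutral) auto
  finally show ?thesis .
qed

lemma X_zero_across_legs:
  assumes x: "x \<noteq> r" and y: "y \<noteq> r" and legs: "leg x \<noteq> leg y" and depths: "depth x + depth y = d"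
  shows "X $ x $ y = 0"
proof -
  have "leg_value d (leg x) (leg y) = 0"
    by (rule zero_if_symmetric_zero_row_sums[OF _ card_children_root leg_value_sym leg_value_row_sum
          leg_in_children_root[OF x] leg_in_children_root[OF y] legs]) simp_all
  then have "scaled_X x y = 0" using scaled_X_eq_leg_value[OF x y legs depths] by simp
  then show ?thesis unfolding scaled_X_def using path_product_nonzero by simp
qed

end

lemma X_zero_on_leg_at_dist:
  assumes X_zero_if_dist_less: "\<forall>x y. spider_dist x y < d \<longrightarrow> X $ x $ y = 0"
    and on_leg: "x = r \<or> leg x = leg y" and depth_y: "depth y = depth x + d"
  shows "X $ x $ y = 0"
proof -
  have ancestor: "ancestor d y = x" using ancestor_on_leg[OF on_leg] depth_y by simp
  consider "d = 0" | "d = 1" | "2 \<le> d" by linarith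
  then show ?thesis
  proof cases
    case 1
    then show ?thesis using ancestor X_diag by simp
  next
    case 2
    then have "y \<noteq> r" "parent y = x" using ancestor depth_y by (auto simp: ancestor_Suc)
    then show ?thesis using X_edge edge_parent X_sym by metis
  next
    case 3
    show ?thesis using X_zero_along_leg[of d] X_zero_if_dist_less 3 on_leg depth_y by blast
  qed
qed

lemma X_zero_at_dist: "spider_dist x y = d \<Longrightarrow> X $ x $ y = 0"
proof (induction d arbitrary: x y rule: less_induct)
  case (less d)
  have X_zero_if_dist_less: "\<forall>x y. spider_dist x y < d \<longrightarrow> X $ x $ y = 0" using less.IH by blast
  show ?case
  proof (cases "x = r \<or> y = r \<or> leg x = leg y")
    case True
    consider "x = r \<or> leg x = leg y" "depth x \<le> depth y"
      | "y = r \<or> leg y = leg x" "depth y \<le> depth x"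
      using True nat_le_linear depth_root[unfolded] by (metis depth_eq_0_iff le_0_eq)
    then show ?thesis
    proof cases
      case 1
      then have "depth y = depth x + d" using spider_dist_on_leg less.prems by simp
      then show ?thesis by (rule X_zero_on_leg_at_dist[OF X_zero_if_dist_less 1(1)])
    next
      case 2
      then have "depth x = depth y + d"
        using spider_dist_on_leg[OF 2] spider_dist_sym[of x y] less.prems by simp
      then have "X $ y $ x = 0" by (rule X_zero_on_leg_at_dist[OF X_zero_if_dist_less 2(1)])
      then show ?thesis using X_sym by simp
    qed
  next
    case False
    then have "depth x + depth y = d"
      using spider_dist_across_legs less.prems by simp
    moreover have "2 \<le> d" using calculation False depth_gt_0_iff[of x] depth_gt_0_iff[of y] by simp
    ultimately show ?thesis using X_zero_across_legs[of d x y] X_zero_if_dist_less False by blast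
  qed
qed

lemma X_eq_0: "X = 0"
  using X_zero_at_dist by (simp add: vec_eq_iff)

end

lemma (in spider) in_G_SSP: "in_G_SSP E"
  unfolding in_G_SSP_def SSP_def
proof (intro ballI allI impI)
  fix A X :: "real^'n^'n"
  assume "A \<in> S_graph E"
    and "symmetric_mat X \<and> (\<forall>i j. A $ i $ j * X $ i $ j = 0) \<and> (\<forall>i. X $ i $ i = 0) \<and> A ** X - X ** A = 0"
  then interpret spider_ssp_witness E r A X
    by unfold_locales auto
  show "X = 0" by (rule X_eq_0)
qed

lemma spider_if_degrees:
  assumes "is_tree E" "\<And>v. degree E v < 4"
    and "\<not> (\<exists>u v. u \<noteq> v \<and> degree E u = 3 \<and> degree E v = 3)"
  shows "\<exists>c. spider E c"
proof -
  obtain c where c: "\<And>z. z \<noteq> c \<Longrightarrow> degree E z \<noteq> 3"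
    using assms(3) by blast
  have "spider E c"
  proof (unfold_locales)
    show "is_tree E" by fact
    show "degree E z \<le> 2" if "z \<noteq> c" for z using c[OF that] assms(2)[of z] by simp
    show "degree E c \<le> 3" using assms(2)[of c] by simp
  qed
  then show ?thesis by blast
qed

theorem theorem4p3:
  fixes E :: "'n::finite \<Rightarrow> 'n \<Rightarrow> bool"
  assumes "is_tree E"
  shows "in_G_SSP E \<longleftrightarrow>
           (\<forall>v. degree E v < 4) \<and>
           \<not> (\<exists>u v. u \<noteq> v \<and> degree E u = 3 \<and> degree E v = 3)"
proof
  assume "in_G_SSP E"
  then show "(\<forall>v. degree E v < 4) \<and> \<not> (\<exists>u v. u \<noteq> v \<and> degree E u = 3 \<and> degree E v = 3)"
    using not_in_G_SSP_if_degree_ge_4[OF assms] not_in_G_SSP_if_two_degree_3[OF assms]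
    by (meson not_le)
next
  assume "(\<forall>v. degree E v < 4) \<and> \<not> (\<exists>u v. u \<noteq> v \<and> degree E u = 3 \<and> degree E v = 3)"
  then obtain c where "spider E c" using spider_if_degrees[OF assms] by blast
  then show "in_G_SSP E" by (rule spider.in_G_SSP)
qed

end
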